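(* Let $p$ be a real homogeneous polynomial of degree $d$ in $n$ real variables, let $\mathbb{S}^{n-1}\subset\mathbb{R}^n$ be the unit sphere and $dx$ the rotation-invariant probability measure on $\mathbb{S}^{n-1}$. For a positive integer $k$ define $\|p\|_{2k}=\left(\int_{\mathbb{S}^{n-1}}p^{2k}(x)\,dx\right)^{1/(2k)}$ and $\|p\|_\infty=\max_{x\in\mathbb{S}^{n-1}}|p(x)|$. Then $$\|p\|_{2k}\le\|p\|_\infty\le\binom{kd+n-1}{kd}^{1/(2k)}\|p\|_{2k}.$$ *)

theory Defs
  imports "HOL-Analysis.Analysis"
begin

definition homogeneous_poly :: "nat \<Rightarrow> (real^'n \<Rightarrow> real) \<Rightarrow> bool" where
  "homogeneous_poly d p \<longleftrightarrow>
     (\<exists>c :: ('n \<Rightarrow> nat) \<Rightarrow> real. \<forall>x.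
        p x = (\<Sum>\<alpha>\<in>{\<alpha>. (\<Sum>i\<in>UNIV. \<alpha> i) = d}. c \<alpha> * (\<Prod>i\<in>UNIV. (x $ i) ^ \<alpha> i)))"

text \<open>The rotation-invariant probability measure on the unit sphere S^(n-1):
  the image of the normalized Lebesgue measure on the unit ball under radial
  projection x / |x| (normalized cone measure = normalized surface measure).\<close>
definition sphere_measure :: "(real^'n) measure" where
  "sphere_measure = distr (uniform_measure lborel (ball 0 1)) borel (\<lambda>x. x /\<^sub>R norm x)"

definition Lnorm :: "nat \<Rightarrow> (real^'n \<Rightarrow> real) \<Rightarrow> real" where
  "Lnorm k p = (integral\<^sup>L sphere_measure (\<lambda>x. p x ^ (2 * k))) powr (1 / (2 * real k))"

definition sup_norm :: "(real^'n \<Rightarrow> real) \<Rightarrow> real" where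
  "sup_norm p = (SUP x\<in>sphere 0 1. \<bar>p x\<bar>)"

end

theory Submission
  imports Defs "HOL-Library.Multiset"
begin

text \<open>Let \<open>m = k d\<close> and \<open>q = p\<^sup>k\<close>, a homogeneous polynomial of degree \<open>m\<close>. On the sphere the
  homogeneous polynomials of degree \<open>m\<close> span a space of dimension at most
  \<open>N = (m + n - 1 choose m)\<close>, the number of monomials of degree \<open>m\<close>. Gram--Schmidt for the \<open>L\<^sup>2\<close>
  inner product of the sphere measure yields an orthonormal basis \<open>e\<^sub>1, \<dots>, e\<^sub>r\<close> with \<open>r \<le> N\<close>,
  and Cauchy--Schwarz gives \<open>q(x)\<^sup>2 \<le> K(x) \<integral> q\<^sup>2\<close> with \<open>K(x) = \<Sum>\<^sub>i e\<^sub>i(x)\<^sup>2\<close>. The space and the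
  measure are rotation invariant, which forces \<open>K\<close> to be constant on the sphere, and integrating
  shows \<open>K = r \<le> N\<close>. Hence \<open>p(x)\<^sup>2\<^sup>k \<le> N \<integral> p\<^sup>2\<^sup>k\<close> on the sphere. The other inequality holds
  because the sphere measure is a probability measure.\<close>

section \<open>Homogeneous polynomials\<close>

definition monomial :: "('n::finite \<Rightarrow> nat) \<Rightarrow> real^'n \<Rightarrow> real" where
  "monomial \<alpha> x = (\<Prod>i\<in>UNIV. (x $ i) ^ \<alpha> i)"

definition exponents_of_degree :: "nat \<Rightarrow> ('n::finite \<Rightarrow> nat) set" where
  "exponents_of_degree d = {\<alpha>. (\<Sum>i\<in>UNIV. \<alpha> i) = d}"

lemma homogeneous_poly_iff:
  "homogeneous_poly d p \<longleftrightarrow>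
     (\<exists>c. \<forall>x. p x = (\<Sum>\<alpha>\<in>exponents_of_degree d. c \<alpha> * monomial \<alpha> x))"
  unfolding homogeneous_poly_def exponents_of_degree_def monomial_def by simp

lemma finite_exponents_of_degree: "finite (exponents_of_degree d :: ('n::finite \<Rightarrow> nat) set)"
proof (rule finite_subset)
  show "exponents_of_degree d \<subseteq> PiE UNIV (\<lambda>_::'n. {..d})"
    unfolding exponents_of_degree_def
    by (auto simp: PiE_UNIV_domain intro!: member_le_sum[of _ UNIV, simplified])
qed (intro finite_PiE; simp)

text \<open>Exponent vectors of total degree \<open>d\<close> are multisets of size \<open>d\<close> over the coordinates.\<close>
lemma card_exponents_of_degree_le:
  "card (exponents_of_degree d :: ('n::finite \<Rightarrow> nat) set) \<le> (d + CARD('n) - 1) choose d"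
proof -
  define F where "F = (\<lambda>\<alpha>::'n \<Rightarrow> nat. \<Sum>i\<in>UNIV. replicate_mset (\<alpha> i) i)"
  have count_F: "count (F \<alpha>) j = \<alpha> j" for \<alpha> j
    unfolding F_def by (simp add: count_sum)
  have "inj_on F (exponents_of_degree d)"
    by (intro inj_onI) (metis count_F ext)
  moreover have "F ` exponents_of_degree d \<subseteq> multisets_of_size UNIV d"
    unfolding multisets_of_size_def exponents_of_degree_def F_def by auto
  ultimately have "card (exponents_of_degree d :: ('n \<Rightarrow> nat) set)
      \<le> card (multisets_of_size (UNIV::'n set) d)"
    by (rule card_inj_on_le[OF _ _ finite_multisets_of_size]) auto
  also have "\<dots> = (CARD('n) + d - 1) choose d"
    by (rule card_multisets_of_size) simp
  finally show ?thesis by (simp add: add.commute)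
qed

lemma homogeneous_poly_zero: "homogeneous_poly d (\<lambda>x. 0)"
  unfolding homogeneous_poly_iff by (intro exI[of _ "\<lambda>_. 0"]) simp

lemma homogeneous_poly_add:
  assumes "homogeneous_poly d p" "homogeneous_poly d q"
  shows "homogeneous_poly d (\<lambda>x. p x + q x)"
proof -
  from assms obtain c c' where
    "\<forall>x. p x = (\<Sum>\<alpha>\<in>exponents_of_degree d. c \<alpha> * monomial \<alpha> x)"
    "\<forall>x. q x = (\<Sum>\<alpha>\<in>exponents_of_degree d. c' \<alpha> * monomial \<alpha> x)"
    by (auto simp: homogeneous_poly_iff)
  then show ?thesis
    unfolding homogeneous_poly_iff
    by (intro exI[of _ "\<lambda>\<alpha>. c \<alpha> + c' \<alpha>"]) (simp add: sum.distrib distrib_right)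
qed

lemma homogeneous_poly_cmult:
  assumes "homogeneous_poly d p"
  shows "homogeneous_poly d (\<lambda>x. a * p x)"
proof -
  from assms obtain c where "\<forall>x. p x = (\<Sum>\<alpha>\<in>exponents_of_degree d. c \<alpha> * monomial \<alpha> x)"
    by (auto simp: homogeneous_poly_iff)
  then show ?thesis
    unfolding homogeneous_poly_iff
    by (intro exI[of _ "\<lambda>\<alpha>. a * c \<alpha>"]) (simp add: sum_distrib_left mult.assoc)
qed

lemma homogeneous_poly_sum:
  assumes "finite I" "\<And>i. i \<in> I \<Longrightarrow> homogeneous_poly d (f i)"
  shows "homogeneous_poly d (\<lambda>x. \<Sum>i\<in>I. f i x)"
  using assms by (induction I rule: finite_induct) (auto intro: homogeneous_poly_add homogeneous_poly_zero)

lemma homogeneous_poly_monomial: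
  assumes "\<alpha> \<in> exponents_of_degree d"
  shows "homogeneous_poly d (monomial \<alpha>)"
proof -
  have expansion: "monomial \<alpha> x = (\<Sum>\<beta>\<in>exponents_of_degree d. of_bool (\<beta> = \<alpha>) * monomial \<beta> x)" for x
    using assms by (subst sum_of_bool_mult_eq) (auto simp: finite_exponents_of_degree Int_absorb1)
  show ?thesis
    unfolding homogeneous_poly_iff by (intro exI[of _ "\<lambda>\<beta>. of_bool (\<beta> = \<alpha>)"] allI expansion)
qed

lemma homogeneous_poly_const: "homogeneous_poly 0 (\<lambda>x. a)"
proof -
  have degree_0: "exponents_of_degree 0 = {\<lambda>_. 0::nat}"
    unfolding exponents_of_degree_def by auto
  show ?thesis
    unfolding homogeneous_poly_iff degree_0 by (intro exI[of _ "\<lambda>_. a"]) (simp add: monomial_def)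
qed

lemma monomial_add: "monomial (\<lambda>i. \<alpha> i + \<beta> i) x = monomial \<alpha> x * monomial \<beta> x"
  unfolding monomial_def by (simp add: power_add prod.distrib)

lemma homogeneous_poly_mult:
  fixes p q :: "real^'n \<Rightarrow> real"
  assumes "homogeneous_poly a p" "homogeneous_poly b q"
  shows "homogeneous_poly (a + b) (\<lambda>x. p x * q x)"
proof -
  from assms obtain c c' where
    p: "\<And>x. p x = (\<Sum>\<alpha>\<in>exponents_of_degree a. c \<alpha> * monomial \<alpha> x)" and
    q: "\<And>x. q x = (\<Sum>\<beta>\<in>exponents_of_degree b. c' \<beta> * monomial \<beta> x)"
    by (auto simp: homogeneous_poly_iff)
  have product: "(\<lambda>x. p x * q x) = (\<lambda>x. \<Sum>\<alpha>\<in>exponents_of_degree a. \<Sum>\<beta>\<in>exponents_of_degree b.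
          (c \<alpha> * c' \<beta>) * monomial (\<lambda>i. \<alpha> i + \<beta> i) x)"
    unfolding p q sum_product monomial_add by (simp add: mult_ac)
  have "homogeneous_poly (a + b) (monomial (\<lambda>i. \<alpha> i + \<beta> i))"
    if "\<alpha> \<in> exponents_of_degree a" "\<beta> \<in> exponents_of_degree b" for \<alpha> \<beta>
    using that by (intro homogeneous_poly_monomial) (simp add: exponents_of_degree_def sum.distrib)
  then show ?thesis
    unfolding product
    by (intro homogeneous_poly_sum homogeneous_poly_cmult finite_exponents_of_degree)
qed

lemma homogeneous_poly_power:
  assumes "homogeneous_poly d p"
  shows "homogeneous_poly (k * d) (\<lambda>x. p x ^ k)"
proof (induction k)
  case 0
  then show ?case using homogeneous_poly_const by simp
next
  case (Suc k)
  from homogeneous_poly_mult[OF assms Suc] show ?case by (simp add: add.commute)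
qed

lemma homogeneous_poly_prod:
  assumes "finite I" "\<And>i. i \<in> I \<Longrightarrow> homogeneous_poly (d i) (f i)"
  shows "homogeneous_poly (\<Sum>i\<in>I. d i) (\<lambda>x. \<Prod>i\<in>I. f i x)"
  using assms
  by (induction I rule: finite_induct) (auto intro: homogeneous_poly_const homogeneous_poly_mult)

lemma homogeneous_poly_component: "homogeneous_poly 1 (\<lambda>x::real^'n. x $ j)"
proof -
  have "(\<lambda>x::real^'n. x $ j) = monomial (\<lambda>i. if i = j then 1 else 0)"
    by (simp add: fun_eq_iff monomial_def if_distrib prod.If_cases)
  then show ?thesis
    by (simp add: homogeneous_poly_monomial exponents_of_degree_def)
qed

lemma homogeneous_poly_compose_linear:
  assumes "homogeneous_poly d p" "linear f"
  shows "homogeneous_poly d (\<lambda>x::real^'n. p (f x))"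
proof -
  from assms obtain c where p_expansion:
    "\<And>x. p x = (\<Sum>\<alpha>\<in>exponents_of_degree d. c \<alpha> * monomial \<alpha> x)"
    by (auto simp: homogeneous_poly_iff)
  have component: "homogeneous_poly 1 (\<lambda>x. f x $ i)" for i
  proof -
    have components: "(\<lambda>x. f x $ i) = (\<lambda>x. \<Sum>j\<in>UNIV. f (axis j 1) $ i * x $ j)"
      by (intro ext, subst linear_componentwise[OF assms(2)[folded linear_matrix_vector_mul_eq]])
        (simp add: mult.commute)
    show ?thesis
      by (subst components, intro homogeneous_poly_sum homogeneous_poly_cmult homogeneous_poly_component)
        simp
  qed
  have "homogeneous_poly d (\<lambda>x. monomial \<alpha> (f x))" if "\<alpha> \<in> exponents_of_degree d" for \<alpha>
    using homogeneous_poly_prod[of UNIV "\<lambda>i. \<alpha> i * 1", OF _ homogeneous_poly_power[OF component]]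
      that
    by (simp add: monomial_def exponents_of_degree_def)
  then show ?thesis
    unfolding p_expansion
    by (intro homogeneous_poly_sum homogeneous_poly_cmult finite_exponents_of_degree)
qed

lemma continuous_on_homogeneous_poly:
  fixes p :: "real^'n \<Rightarrow> real"
  assumes "homogeneous_poly d p"
  shows "continuous_on UNIV p"
proof -
  from assms obtain c where "\<And>x. p x = (\<Sum>\<alpha>\<in>exponents_of_degree d. c \<alpha> * monomial \<alpha> x)"
    by (auto simp: homogeneous_poly_iff)
  then have "p = (\<lambda>x. \<Sum>\<alpha>\<in>exponents_of_degree d. c \<alpha> * (\<Prod>i\<in>UNIV. (x $ i) ^ \<alpha> i))"
    by (auto simp: monomial_def)
  moreover have "continuous_on UNIV
      (\<lambda>x::real^'n. \<Sum>\<alpha>\<in>exponents_of_degree d. c \<alpha> * (\<Prod>i\<in>UNIV. (x $ i) ^ \<alpha> i))"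
    by (intro continuous_intros)
  ultimately show ?thesis
    by simp
qed

section \<open>The sphere measure\<close>

lemma sets_sphere_measure [simp, measurable_cong]: "sets sphere_measure = sets borel"
  by (simp add: sphere_measure_def)

lemma space_sphere_measure [simp]: "space sphere_measure = UNIV"
  by (simp add: sphere_measure_def)

lemma emeasure_lborel_ball_neq_0:
  fixes x :: "'a::euclidean_space"
  assumes "r > 0"
  shows "emeasure lborel (ball x r) \<noteq> 0"
  using content_ball_pos[OF assms, of x] emeasure_lborel_ball_finite[of x r]
  by (simp add: emeasure_eq_ennreal_measure)

lemma emeasure_uniform_measure_ball_UNIV:
  "emeasure (uniform_measure lborel (ball (0::'a::euclidean_space) 1)) UNIV = 1"
  using emeasure_lborel_ball_neq_0[of 1 "0::'a"] emeasure_lborel_ball_finite[of "0::'a" 1] by simp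

lemma finite_measure_sphere_measure: "finite_measure sphere_measure"
  by (rule finite_measureI)
    (simp add: sphere_measure_def emeasure_distr emeasure_uniform_measure_ball_UNIV)

lemma measure_sphere_measure_UNIV [simp]: "measure sphere_measure UNIV = 1"
  by (simp add: sphere_measure_def measure_def emeasure_distr emeasure_uniform_measure_ball_UNIV)

lemma AE_sphere_measure_norm: "AE x in sphere_measure. norm x = 1"
proof -
  have "AE x in uniform_measure lborel (ball 0 1). norm (x /\<^sub>R norm x) = 1"
    by (rule AE_uniform_measureI)
      (use AE_lborel_singleton[of 0] in \<open>auto elim!: eventually_mono\<close>)
  then show ?thesis
    unfolding sphere_measure_def by (subst AE_distr_iff) auto
qed

lemma integrable_sphere_measure:
  fixes h :: "real^'n \<Rightarrow> real"
  assumes "continuous_on UNIV h"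
  shows "integrable sphere_measure h"
proof -
  have "compact (h ` sphere 0 1)"
    by (rule compact_continuous_image) (use assms in \<open>auto intro: continuous_on_subset\<close>)
  then obtain B where B: "\<And>x. norm x = 1 \<Longrightarrow> norm (h x) \<le> B"
    using compact_imp_bounded bounded_iff by (metis image_eqI mem_sphere_0)
  have [measurable]: "h \<in> borel_measurable borel"
    using assms by (rule borel_measurable_continuous_onI)
  have "AE x in sphere_measure. norm (h x) \<le> B"
    using AE_sphere_measure_norm by (rule eventually_mono) (rule B)
  then show ?thesis
    by (intro finite_measure.integrable_const_bound[OF finite_measure_sphere_measure]) auto
qed

text \<open>Radial projection pulls the set where \<open>h \<noteq> 0\<close> back to an open subset of the punctured ball,
  which is a Lebesgue null set only if it is empty.\<close>
lemma AE_sphere_measure_eq_0_imp_eq_0: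
  fixes h :: "real^'n \<Rightarrow> real"
  assumes h: "continuous_on UNIV h" and ae: "AE x in sphere_measure. h x = 0" and "norm x0 = 1"
  shows "h x0 = 0"
proof (rule ccontr)
  assume "h x0 \<noteq> 0"
  have [measurable]: "h \<in> borel_measurable borel"
    using h by (rule borel_measurable_continuous_onI)
  have "AE x in uniform_measure lborel (ball 0 1). h (x /\<^sub>R norm x) = 0"
    using ae unfolding sphere_measure_def by (subst (asm) AE_distr_iff) auto
  then have "AE x in lborel. x \<in> ball 0 1 \<longrightarrow> h (x /\<^sub>R norm x) = 0"
    by (subst (asm) AE_uniform_measure[OF emeasure_lborel_ball_neq_0 emeasure_lborel_ball_finite]) simp_all
  then have "AE x in lebesgue. x \<in> ball 0 1 \<longrightarrow> h (x /\<^sub>R norm x) = 0"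
    by (rule AE_completion)
  moreover define T where "T = (ball (0::real^'n) 1 - {0}) \<inter> (\<lambda>x. h (x /\<^sub>R norm x)) -` (- {0})"
  ultimately have "AE x \<in> T in lebesgue. x \<in> {}"
    by (auto simp: T_def elim!: eventually_mono)
  moreover have "open T"
    unfolding T_def
    by (intro continuous_open_preimage continuous_on_compose2[OF h])
      (auto intro!: continuous_intros)
  moreover have "x0 /\<^sub>R 2 \<in> T"
    using \<open>norm x0 = 1\<close> \<open>h x0 \<noteq> 0\<close> by (auto simp: T_def)
  ultimately show False
    using mem_closed_if_AE_lebesgue_open[OF _ closed_empty] by blast
qed

section \<open>Rotation invariance\<close>

text \<open>The library lemma \<open>measure_orthogonal_image\<close> needs a well-ordered index type. Instead:
  an orthogonal map sends balls to balls of the same radius, and by Vitali's covering theorem every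
  open set is a disjoint union of balls up to a null set.\<close>

lemma open_disjoint_balls_AE:
  fixes S :: "'a::euclidean_space set"
  assumes "open S"
  obtains C :: "('a \<times> real) set"
  where "countable C" "\<And>i. i \<in> C \<Longrightarrow> snd i > 0 \<and> ball (fst i) (snd i) \<subseteq> S"
    "disjoint_family_on (\<lambda>i. ball (fst i) (snd i)) C"
    "S - (\<Union>i\<in>C. ball (fst i) (snd i)) \<in> null_sets lebesgue"
proof -
  define K where "K = {(c, r::real). r > 0 \<and> ball c r \<subseteq> S}"
  have "\<exists>i. i \<in> K \<and> x \<in> ball (fst i) (snd i) \<and> snd i < d" if "x \<in> S" "d > 0" for x d
  proof -
    obtain e where "e > 0" "ball x e \<subseteq> S"
      using \<open>open S\<close> \<open>x \<in> S\<close> by (rule openE)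
    then have "(x, min e (d/2)) \<in> K"
      using \<open>d > 0\<close> by (auto simp: K_def)
    then show ?thesis
      using \<open>e > 0\<close> \<open>d > 0\<close> by (intro exI[of _ "(x, min e (d/2))"]) auto
  qed
  then obtain C where "countable C" "C \<subseteq> K"
    and pairwise: "pairwise (\<lambda>i j. disjnt (ball (fst i) (snd i)) (ball (fst j) (snd j))) C"
    and negligible: "negligible (S - (\<Union>i\<in>C. ball (fst i) (snd i)))"
    by (rule Vitali_covering_theorem_balls[of S K fst snd]) blast
  have "snd i > 0 \<and> ball (fst i) (snd i) \<subseteq> S" if "i \<in> C" for i
    using that \<open>C \<subseteq> K\<close> by (cases i) (auto simp: K_def)
  moreover have "disjoint_family_on (\<lambda>i. ball (fst i) (snd i)) C"
    using pairwise by (auto simp: disjoint_family_on_def pairwise_def disjnt_def)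
  ultimately show ?thesis
    using that \<open>countable C\<close> negligible by (simp add: negligible_iff_null_sets)
qed

lemma emeasure_lebesgue_orthogonal_image_open:
  fixes f :: "'a::euclidean_space \<Rightarrow> 'a"
  assumes f: "orthogonal_transformation f" and "open S"
  shows "emeasure lebesgue (f ` S) = emeasure lebesgue S"
proof -
  obtain C where C: "countable C" "\<And>i. i \<in> C \<Longrightarrow> snd i > 0 \<and> ball (fst i) (snd i) \<subseteq> S"
    and disjoint: "disjoint_family_on (\<lambda>i. ball (fst i) (snd i)) C"
    and null: "S - (\<Union>i\<in>C. ball (fst i) (snd i)) \<in> null_sets lebesgue"
    using open_disjoint_balls_AE[OF \<open>open S\<close>] by blast
  define U where "U = (\<Union>i\<in>C. ball (fst i) (snd i))"
  have "U \<subseteq> S"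
    using C(2) by (auto simp: U_def)
  have image_ball: "f ` ball c r = ball (f c) r" for c r
    by (rule image_orthogonal_transformation_ball[OF f])
  have "inj f"
    using f by (rule orthogonal_transformation_inj)
  then have disjoint_image: "disjoint_family_on (\<lambda>i. ball (f (fst i)) (snd i)) C"
    using disjoint by (simp add: disjoint_family_on_def image_ball[symmetric] image_Int[symmetric])
  have "f ` (S - U) \<in> null_sets lebesgue"
    unfolding negligible_iff_null_sets[symmetric]
    using null f
    by (intro negligible_differentiable_image_negligible[OF order_refl] linear_imp_differentiable_on)
      (auto simp: U_def negligible_iff_null_sets orthogonal_transformation_linear)
  have "emeasure lebesgue (f ` S) = emeasure lebesgue (f ` U \<union> f ` (S - U))"
    using \<open>U \<subseteq> S\<close> by (simp add: Un_absorb1 flip: image_Un)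
  also have "\<dots> = emeasure lebesgue (f ` U)"
    using \<open>f ` (S - U) \<in> null_sets lebesgue\<close> C(1)
    by (intro emeasure_Un_null_set) (auto simp: U_def image_UN image_ball)
  also have "\<dots> = (\<integral>\<^sup>+i. emeasure lebesgue (ball (f (fst i)) (snd i)) \<partial>count_space C)"
    unfolding U_def image_UN image_ball
    by (rule emeasure_UN_countable[OF _ C(1) disjoint_image]) simp
  also have "\<dots> = (\<integral>\<^sup>+i. emeasure lebesgue (ball (fst i) (snd i)) \<partial>count_space C)"
    using C(2) by (intro nn_integral_cong) (simp add: emeasure_ball less_imp_le)
  also have "\<dots> = emeasure lebesgue U"
    unfolding U_def by (rule emeasure_UN_countable[OF _ C(1) disjoint, symmetric]) simp
  also have "\<dots> = emeasure lebesgue (U \<union> (S - U))"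
    using null C(1) by (intro emeasure_Un_null_set[symmetric]) (auto simp: U_def)
  also have "\<dots> = emeasure lebesgue S"
    using \<open>U \<subseteq> S\<close> by (simp add: Un_absorb1)
  finally show ?thesis .
qed

lemma borel_measurable_orthogonal_transformation:
  fixes f :: "'a::euclidean_space \<Rightarrow> 'a"
  assumes "orthogonal_transformation f"
  shows "f \<in> borel_measurable borel"
  using assms
  by (metis borel_measurable_continuous_onI linear_continuous_on linear_conv_bounded_linear
      orthogonal_transformation_linear)

lemma lborel_distr_orthogonal_transformation:
  fixes f :: "'a::euclidean_space \<Rightarrow> 'a"
  assumes f: "orthogonal_transformation f"
  shows "distr lborel borel f = lborel"
proof (rule lborel_eqI[symmetric])
  have [measurable]: "f \<in> borel_measurable borel"
    using f by (rule borel_measurable_orthogonal_transformation)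
  have vimage: "f -` S = inv f ` S" for S
    using f by (simp add: bij_vimage_eq_inv_image orthogonal_transformation_bij)
  fix l u :: 'a
  assume "\<And>b. b \<in> Basis \<Longrightarrow> l \<bullet> b \<le> u \<bullet> b"
  have "emeasure (distr lborel borel f) (box l u) = emeasure lborel (f -` box l u)"
    by (simp add: emeasure_distr)
  also have "\<dots> = emeasure lebesgue (inv f ` box l u)"
    using measurable_sets_borel[of f borel "box l u"] by (simp add: vimage[symmetric])
  also have "\<dots> = emeasure lebesgue (box l u)"
    by (rule emeasure_lebesgue_orthogonal_image_open[OF orthogonal_transformation_inv[OF f] open_box])
  also have "\<dots> = emeasure lborel (box l u)"
    by simp
  finally show "emeasure (distr lborel borel f) (box l u) = (\<Prod>b\<in>Basis. (u - l) \<bullet> b)"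
    using \<open>\<And>b. b \<in> Basis \<Longrightarrow> l \<bullet> b \<le> u \<bullet> b\<close> by (simp add: emeasure_lborel_box_eq)
qed simp

lemma uniform_measure_ball_distr_orthogonal_transformation:
  fixes f :: "'a::euclidean_space \<Rightarrow> 'a"
  assumes f: "orthogonal_transformation f"
  shows "distr (uniform_measure lborel (ball 0 1)) borel f = uniform_measure lborel (ball 0 1)"
proof (rule measure_eqI)
  fix A :: "'a set"
  assume "A \<in> sets (distr (uniform_measure lborel (ball 0 1)) borel f)"
  then have [measurable]: "A \<in> sets borel"
    by simp
  have f_measurable [measurable]: "f \<in> borel_measurable borel"
    using f by (rule borel_measurable_orthogonal_transformation)
  have "ball 0 1 \<inter> f -` A = f -` (ball 0 1 \<inter> A)"
    using orthogonal_transformation_norm[OF f] by auto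
  then have "emeasure (distr (uniform_measure lborel (ball 0 1)) borel f) A
      = emeasure (distr lborel borel f) (ball 0 1 \<inter> A) / emeasure lborel (ball (0::'a) 1)"
    using measurable_sets_borel[OF f_measurable] by (simp add: emeasure_distr)
  also have "\<dots> = emeasure (uniform_measure lborel (ball 0 1)) A"
    by (simp add: lborel_distr_orthogonal_transformation[OF f])
  finally show "emeasure (distr (uniform_measure lborel (ball 0 1)) borel f) A
      = emeasure (uniform_measure lborel (ball 0 1)) A" .
qed simp

lemma sphere_measure_distr_orthogonal_transformation:
  fixes f :: "real^'n \<Rightarrow> real^'n"
  assumes f: "orthogonal_transformation f"
  shows "distr sphere_measure borel f = sphere_measure"
proof -
  have "f \<circ> (\<lambda>x. x /\<^sub>R norm x) = (\<lambda>x. x /\<^sub>R norm x) \<circ> f"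
    using orthogonal_transformation_norm[OF f] orthogonal_transformation_scaleR[OF f]
    by (simp add: fun_eq_iff)
  moreover have [measurable]: "f \<in> borel_measurable borel"
    using f by (rule borel_measurable_orthogonal_transformation)
  ultimately have "distr sphere_measure borel f
      = distr (distr (uniform_measure lborel (ball 0 1)) borel f) borel (\<lambda>x. x /\<^sub>R norm x)"
    unfolding sphere_measure_def by (simp add: distr_distr)
  then show ?thesis
    by (simp add: uniform_measure_ball_distr_orthogonal_transformation[OF f] sphere_measure_def)
qed

lemma integral_sphere_measure_orthogonal_transformation:
  fixes f :: "real^'n \<Rightarrow> real^'n" and h :: "real^'n \<Rightarrow> real"
  assumes f: "orthogonal_transformation f" and [measurable]: "h \<in> borel_measurable borel"
  shows "(\<integral>x. h (f x) \<partial>sphere_measure) = (\<integral>x. h x \<partial>sphere_measure)"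
  using integral_distr[of f sphere_measure borel h] borel_measurable_orthogonal_transformation[OF f]
  by (simp add: sphere_measure_distr_orthogonal_transformation[OF f])

definition sphere_inner :: "(real^'n \<Rightarrow> real) \<Rightarrow> (real^'n \<Rightarrow> real) \<Rightarrow> real" where
  "sphere_inner f g = (\<integral>x. f x * g x \<partial>sphere_measure)"

definition orthonormal_on_sphere :: "(real^'n \<Rightarrow> real) list \<Rightarrow> bool" where
  "orthonormal_on_sphere es \<longleftrightarrow>
     (\<forall>i<length es. \<forall>j<length es. sphere_inner (es ! i) (es ! j) = of_bool (i = j))"

definition in_sphere_span :: "(real^'n \<Rightarrow> real) list \<Rightarrow> (real^'n \<Rightarrow> real) \<Rightarrow> bool" where
  "in_sphere_span es f \<longleftrightarrow>
     (\<exists>a. \<forall>x. norm x = 1 \<longrightarrow> f x = (\<Sum>i<length es. a i * (es ! i) x))"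

lemma sphere_inner_commute: "sphere_inner f g = sphere_inner g f"
  by (simp add: sphere_inner_def mult.commute)

lemma sphere_inner_self_nonneg: "sphere_inner f f \<ge> 0"
  by (simp add: sphere_inner_def integral_nonneg_AE)

lemma integrable_sphere_measure_mult:
  fixes f g :: "real^'n \<Rightarrow> real"
  assumes "continuous_on UNIV f" "continuous_on UNIV g"
  shows "integrable sphere_measure (\<lambda>x. f x * g x)"
  using assms by (intro integrable_sphere_measure continuous_intros)

lemma sphere_inner_diff_left:
  fixes f g e :: "real^'n \<Rightarrow> real"
  assumes "continuous_on UNIV f" "continuous_on UNIV g" "continuous_on UNIV e"
  shows "sphere_inner (\<lambda>x. f x - g x) e = sphere_inner f e - sphere_inner g e"
  unfolding sphere_inner_def left_diff_distrib
  using assms by (intro Bochner_Integration.integral_diff integrable_sphere_measure_mult)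

lemma sphere_inner_cmult_left: "sphere_inner (\<lambda>x. a * f x) e = a * sphere_inner f e"
  by (simp add: sphere_inner_def mult.assoc)

lemma sphere_inner_sum_left:
  fixes e :: "real^'n \<Rightarrow> real"
  assumes "finite I" "\<And>i. i \<in> I \<Longrightarrow> continuous_on UNIV (f i)" "continuous_on UNIV e"
  shows "sphere_inner (\<lambda>x. \<Sum>i\<in>I. f i x) e = (\<Sum>i\<in>I. sphere_inner (f i) e)"
  unfolding sphere_inner_def sum_distrib_right
  using assms by (intro Bochner_Integration.integral_sum integrable_sphere_measure_mult)

lemma sphere_inner_cong_left:
  fixes f f' e :: "real^'n \<Rightarrow> real"
  assumes "\<And>x. norm x = 1 \<Longrightarrow> f x = f' x"
    and "continuous_on UNIV f" "continuous_on UNIV f'" "continuous_on UNIV e"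
  shows "sphere_inner f e = sphere_inner f' e"
  unfolding sphere_inner_def
proof (rule integral_cong_AE)
  show "AE x in sphere_measure. f x * e x = f' x * e x"
    using AE_sphere_measure_norm by (rule eventually_mono) (simp add: assms(1))
qed (use assms integrable_sphere_measure_mult in blast)+

lemma sphere_inner_self_eq_0_imp_eq_0:
  fixes h :: "real^'n \<Rightarrow> real"
  assumes "continuous_on UNIV h" "sphere_inner h h = 0" "norm x = 1"
  shows "h x = 0"
proof -
  have "AE x in sphere_measure. h x * h x = 0"
    using integral_nonneg_eq_0_iff_AE[OF integrable_sphere_measure_mult[OF assms(1) assms(1)]] assms(2)
    by (simp add: sphere_inner_def)
  then have "h x * h x = 0"
    using assms(1,3) by (intro AE_sphere_measure_eq_0_imp_eq_0[where h="\<lambda>x. h x * h x"] continuous_intros)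
  then show ?thesis
    by simp
qed

lemma sphere_inner_lincomb_orthonormal:
  assumes "orthonormal_on_sphere es" "\<forall>e\<in>set es. continuous_on UNIV e"
    and "\<And>x. norm x = 1 \<Longrightarrow> f x = (\<Sum>i<length es. a i * (es ! i) x)"
    and "continuous_on UNIV f" "j < length es"
  shows "sphere_inner f (es ! j) = a j"
proof -
  have continuous: "continuous_on UNIV (es ! i)" if "i < length es" for i
    using assms(2) that by simp
  have "sphere_inner f (es ! j) = sphere_inner (\<lambda>x. \<Sum>i<length es. a i * (es ! i) x) (es ! j)"
    using assms(3,4,5) continuous by (intro sphere_inner_cong_left continuous_intros) auto
  also have "\<dots> = (\<Sum>i<length es. sphere_inner (\<lambda>x. a i * (es ! i) x) (es ! j))"
    using assms(5) continuous by (intro sphere_inner_sum_left continuous_intros) auto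
  also have "\<dots> = (\<Sum>i<length es. a i * of_bool (i = j))"
    using assms(1,5) by (intro sum.cong) (auto simp: sphere_inner_cmult_left orthonormal_on_sphere_def)
  also have "\<dots> = a j"
    using assms(5) by simp
  finally show ?thesis .
qed

lemma in_sphere_span_expansion:
  assumes "orthonormal_on_sphere es" "\<forall>e\<in>set es. continuous_on UNIV e"
    and "in_sphere_span es f" "continuous_on UNIV f" "norm x = 1"
  shows "f x = (\<Sum>i<length es. sphere_inner f (es ! i) * (es ! i) x)"
proof -
  from assms(3) obtain a where a: "\<And>x. norm x = 1 \<Longrightarrow> f x = (\<Sum>i<length es. a i * (es ! i) x)"
    by (auto simp: in_sphere_span_def)
  have "sphere_inner f (es ! i) = a i" if "i < length es" for i
    by (rule sphere_inner_lincomb_orthonormal[OF assms(1,2) a assms(4) that])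
  then show ?thesis
    using a[OF assms(5)] by simp
qed

lemma sphere_inner_self_in_sphere_span:
  assumes "orthonormal_on_sphere es" "\<forall>e\<in>set es. continuous_on UNIV e"
    and "in_sphere_span es f" "continuous_on UNIV f"
  shows "sphere_inner f f = (\<Sum>i<length es. (sphere_inner f (es ! i))\<^sup>2)"
proof -
  have "sphere_inner f f = sphere_inner (\<lambda>x. \<Sum>i<length es. sphere_inner f (es ! i) * (es ! i) x) f"
    using assms by (intro sphere_inner_cong_left in_sphere_span_expansion continuous_intros) auto
  also have "\<dots> = (\<Sum>i<length es. sphere_inner (\<lambda>x. sphere_inner f (es ! i) * (es ! i) x) f)"
    using assms(2,4) by (intro sphere_inner_sum_left continuous_intros) auto
  also have "\<dots> = (\<Sum>i<length es. sphere_inner f (es ! i) * sphere_inner (es ! i) f)"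
    by (simp add: sphere_inner_cmult_left)
  finally show ?thesis
    by (simp add: sphere_inner_commute power2_eq_square)
qed

lemma in_sphere_span_zero: "in_sphere_span es (\<lambda>x. 0)"
  unfolding in_sphere_span_def by (intro exI[of _ "\<lambda>_. 0"]) simp

lemma in_sphere_span_lincomb:
  assumes "in_sphere_span es f" "in_sphere_span es g"
  shows "in_sphere_span es (\<lambda>x. c * f x + g x)"
proof -
  from assms obtain a b where
    "\<And>x. norm x = 1 \<Longrightarrow> f x = (\<Sum>i<length es. a i * (es ! i) x)"
    "\<And>x. norm x = 1 \<Longrightarrow> g x = (\<Sum>i<length es. b i * (es ! i) x)"
    by (auto simp: in_sphere_span_def)
  then show ?thesis
    unfolding in_sphere_span_def
    by (intro exI[of _ "\<lambda>i. c * a i + b i"])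
      (simp add: sum_distrib_left sum.distrib distrib_right mult.assoc)
qed

lemma in_sphere_span_sum:
  assumes "finite I" "\<And>i. i \<in> I \<Longrightarrow> in_sphere_span es (f i)"
  shows "in_sphere_span es (\<lambda>x. \<Sum>i\<in>I. c i * f i x)"
  using assms
  by (induction I rule: finite_induct) (auto intro: in_sphere_span_zero in_sphere_span_lincomb)

lemma in_sphere_span_append:
  assumes "in_sphere_span es f"
  shows "in_sphere_span (es @ fs) f"
proof -
  from assms obtain a where a: "\<And>x. norm x = 1 \<Longrightarrow> f x = (\<Sum>i<length es. a i * (es ! i) x)"
    by (auto simp: in_sphere_span_def)
  define b where "b i = (if i < length es then a i else 0)" for i
  have "(\<Sum>i<length es. a i * (es ! i) x) = (\<Sum>i<length (es @ fs). b i * ((es @ fs) ! i) x)" for x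
    by (rule sum.mono_neutral_cong_left) (simp_all add: b_def nth_append)
  then show ?thesis
    using a unfolding in_sphere_span_def by (intro exI[of _ b]) auto
qed

lemma orthonormal_on_sphere_snoc:
  assumes "orthonormal_on_sphere es"
    and "\<And>j. j < length es \<Longrightarrow> sphere_inner e (es ! j) = 0" "sphere_inner e e = 1"
  shows "orthonormal_on_sphere (es @ [e])"
proof -
  have "sphere_inner (es ! j) e = 0" if "j < length es" for j
    using assms(2)[OF that] by (simp add: sphere_inner_commute)
  then show ?thesis
    using assms unfolding orthonormal_on_sphere_def by (auto simp: nth_append less_Suc_eq)
qed

lemma sphere_inner_residual_orthogonal:
  assumes "orthonormal_on_sphere es" "\<forall>e\<in>set es. continuous_on UNIV e"
    and "continuous_on UNIV g" "j < length es"
  shows "sphere_inner (\<lambda>x. g x - (\<Sum>i<length es. sphere_inner g (es ! i) * (es ! i) x)) (es ! j) = 0"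
proof -
  let ?P = "\<lambda>x. \<Sum>i<length es. sphere_inner g (es ! i) * (es ! i) x"
  have "continuous_on UNIV ?P"
    using assms(2) by (intro continuous_intros) auto
  then have "sphere_inner (\<lambda>x. g x - ?P x) (es ! j) = sphere_inner g (es ! j) - sphere_inner ?P (es ! j)"
    using assms(2-4) by (intro sphere_inner_diff_left) auto
  also have "sphere_inner ?P (es ! j) = sphere_inner g (es ! j)"
    by (rule sphere_inner_lincomb_orthonormal[where a = "\<lambda>i. sphere_inner g (es ! i)",
          OF assms(1,2) _ \<open>continuous_on UNIV ?P\<close> assms(4)]) simp
  finally show ?thesis
    by simp
qed

lemma orthonormal_on_sphere_snoc_normalized:
  assumes "orthonormal_on_sphere es" "\<And>j. j < length es \<Longrightarrow> sphere_inner h (es ! j) = 0"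
    and "sphere_inner h h > 0"
  shows "orthonormal_on_sphere (es @ [\<lambda>x. inverse (sqrt (sphere_inner h h)) * h x])"
proof (rule orthonormal_on_sphere_snoc[OF assms(1)])
  let ?s = "sqrt (sphere_inner h h)"
  show "sphere_inner (\<lambda>x. inverse ?s * h x) (es ! j) = 0" if "j < length es" for j
    using assms(2)[OF that] by (simp add: sphere_inner_cmult_left)
  have "sphere_inner (\<lambda>x. inverse ?s * h x) (\<lambda>x. inverse ?s * h x)
      = inverse ?s * sphere_inner h (\<lambda>x. inverse ?s * h x)"
    by (rule sphere_inner_cmult_left)
  also have "sphere_inner h (\<lambda>x. inverse ?s * h x) = inverse ?s * sphere_inner h h"
    by (subst sphere_inner_commute) (rule sphere_inner_cmult_left)
  also have "inverse ?s * (inverse ?s * sphere_inner h h) = 1"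
    using assms(3) by (simp add: field_simps flip: power2_eq_square)
  finally show "sphere_inner (\<lambda>x. inverse ?s * h x) (\<lambda>x. inverse ?s * h x) = 1" .
qed

lemma in_sphere_span_snoc:
  assumes "\<And>x. norm x = 1 \<Longrightarrow> g x = (\<Sum>i<length es. c i * (es ! i) x) + b * e x"
  shows "in_sphere_span (es @ [e]) g"
proof -
  define a where "a i = (if i < length es then c i else b)" for i
  have "(\<Sum>i<length es. a i * ((es @ [e]) ! i) x) = (\<Sum>i<length es. c i * (es ! i) x)" for x
    by (rule sum.cong) (simp_all add: a_def nth_append)
  then have "g x = (\<Sum>i<length (es @ [e]). a i * ((es @ [e]) ! i) x)" if "norm x = 1" for x
    using assms[OF that] by (simp add: a_def)
  then show ?thesis
    unfolding in_sphere_span_def by blast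
qed

section \<open>Gram--Schmidt orthonormalisation\<close>

locale sphere_function_space =
  fixes V :: "(real^'n::finite \<Rightarrow> real) set"
  assumes continuous_on_mem: "f \<in> V \<Longrightarrow> continuous_on UNIV f"
    and zero_mem: "(\<lambda>x. 0) \<in> V"
    and lincomb_mem: "f \<in> V \<Longrightarrow> g \<in> V \<Longrightarrow> (\<lambda>x. c * f x + g x) \<in> V"
begin

lemma sum_mem: "finite I \<Longrightarrow> (\<And>i. i \<in> I \<Longrightarrow> f i \<in> V) \<Longrightarrow> (\<lambda>x. \<Sum>i\<in>I. c i * f i x) \<in> V"
  by (induction I rule: finite_induct) (auto intro: zero_mem lincomb_mem)

lemma gram_schmidt_step:
  assumes es: "orthonormal_on_sphere es" "set es \<subseteq> V" and "g \<in> V"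
  obtains es' where "orthonormal_on_sphere es'" "set es' \<subseteq> V" "length es' \<le> Suc (length es)"
    "\<And>f. in_sphere_span es f \<Longrightarrow> in_sphere_span es' f" "in_sphere_span es' g"
proof -
  define c where "c i = sphere_inner g (es ! i)" for i
  define h where "h x = g x - (\<Sum>i<length es. c i * (es ! i) x)" for x
  have continuous: "\<forall>e\<in>set es. continuous_on UNIV e" "continuous_on UNIV g"
    using es(2) \<open>g \<in> V\<close> continuous_on_mem by blast+
  have "(\<lambda>x. (-1) * (\<Sum>i<length es. c i * (es ! i) x) + g x) \<in> V"
    using es(2) \<open>g \<in> V\<close> by (intro lincomb_mem sum_mem) auto
  then have "h \<in> V"
    by (simp add: h_def[abs_def])
  have h_orthogonal: "sphere_inner h (es ! j) = 0" if "j < length es" for j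
    unfolding h_def[abs_def] c_def using es(1) continuous that by (rule sphere_inner_residual_orthogonal)
  consider "sphere_inner h h = 0" | "sphere_inner h h > 0"
    using sphere_inner_self_nonneg[of h] by linarith
  then show ?thesis
  proof cases
    case 1
    have "h x = 0" if "norm x = 1" for x
      using continuous_on_mem[OF \<open>h \<in> V\<close>] 1 that by (rule sphere_inner_self_eq_0_imp_eq_0)
    then have "in_sphere_span es g"
      unfolding in_sphere_span_def by (intro exI[of _ c]) (simp add: h_def)
    then show ?thesis
      using es by (intro that[of es]) auto
  next
    case 2
    define s where "s = sqrt (sphere_inner h h)"
    define e where "e x = inverse s * h x" for x
    have "(\<lambda>x. inverse s * h x + 0) \<in> V"
      using \<open>h \<in> V\<close> by (intro lincomb_mem zero_mem)
    then have "e \<in> V"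
      by (simp add: e_def[abs_def])
    have "s * e x = h x" for x
      using 2 by (simp add: e_def s_def)
    then have "in_sphere_span (es @ [e]) g"
      by (intro in_sphere_span_snoc[where c = c and b = s]) (simp add: h_def)
    moreover have "orthonormal_on_sphere (es @ [e])"
      unfolding e_def[abs_def] s_def using es(1) h_orthogonal 2 by (rule orthonormal_on_sphere_snoc_normalized)
    ultimately show ?thesis
      using es \<open>e \<in> V\<close> by (intro that[of "es @ [e]"]) (auto intro: in_sphere_span_append)
  qed
qed

lemma gram_schmidt:
  assumes "finite B" "B \<subseteq> V"
  shows "\<exists>es. orthonormal_on_sphere es \<and> set es \<subseteq> V \<and> length es \<le> card B \<and>
    (\<forall>f\<in>B. in_sphere_span es f)"
  using assms
proof (induction B rule: finite_induct)
  case empty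
  show ?case
    by (intro exI[of _ "[]"]) (simp add: orthonormal_on_sphere_def)
next
  case (insert g B)
  then obtain es where es: "orthonormal_on_sphere es" "set es \<subseteq> V" "length es \<le> card B"
    "\<forall>f\<in>B. in_sphere_span es f"
    by auto
  obtain es' where "orthonormal_on_sphere es'" "set es' \<subseteq> V" "length es' \<le> Suc (length es)"
    "\<And>f. in_sphere_span es f \<Longrightarrow> in_sphere_span es' f" "in_sphere_span es' g"
    using gram_schmidt_step[OF es(1,2)] insert.prems by blast
  then show ?case
    using es(3,4) insert.hyps by (intro exI[of _ es']) auto
qed

end

section \<open>The diagonal of the reproducing kernel\<close>

locale orthonormal_sphere_basis = sphere_function_space V for V :: "(real^'n::finite \<Rightarrow> real) set" +
  fixes es :: "(real^'n \<Rightarrow> real) list"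
  assumes orthonormal: "orthonormal_on_sphere es"
    and basis_mem: "set es \<subseteq> V"
    and spanning: "f \<in> V \<Longrightarrow> in_sphere_span es f"
begin

definition kernel_diagonal :: "real^'n \<Rightarrow> real" where
  "kernel_diagonal x = (\<Sum>i<length es. ((es ! i) x)\<^sup>2)"

lemma kernel_diagonal_nonneg: "kernel_diagonal x \<ge> 0"
  by (simp add: kernel_diagonal_def sum_nonneg)

lemma continuous_on_basis: "\<forall>e\<in>set es. continuous_on UNIV e"
  using basis_mem continuous_on_mem by blast

lemma square_le_sphere_inner_mult_kernel_diagonal:
  assumes "f \<in> V" "norm x = 1"
  shows "(f x)\<^sup>2 \<le> sphere_inner f f * kernel_diagonal x"
proof -
  have "continuous_on UNIV f"
    using assms(1) by (rule continuous_on_mem)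
  have "(f x)\<^sup>2 = (\<Sum>i<length es. sphere_inner f (es ! i) * (es ! i) x)\<^sup>2"
    using in_sphere_span_expansion[OF orthonormal continuous_on_basis spanning[OF assms(1)]
        \<open>continuous_on UNIV f\<close> assms(2)]
    by simp
  also have "\<dots> \<le> (\<Sum>i<length es. (sphere_inner f (es ! i))\<^sup>2) * kernel_diagonal x"
    unfolding kernel_diagonal_def by (rule Cauchy_Schwarz_ineq_sum)
  also have "(\<Sum>i<length es. (sphere_inner f (es ! i))\<^sup>2) = sphere_inner f f"
    using sphere_inner_self_in_sphere_span[OF orthonormal continuous_on_basis spanning[OF assms(1)]
        \<open>continuous_on UNIV f\<close>]
    by simp
  finally show ?thesis .
qed

lemma integral_kernel_diagonal: "(\<integral>x. kernel_diagonal x \<partial>sphere_measure) = length es"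
proof -
  have "(\<integral>x. kernel_diagonal x \<partial>sphere_measure) = (\<Sum>i<length es. sphere_inner (es ! i) (es ! i))"
    unfolding kernel_diagonal_def power2_eq_square sphere_inner_def
    using continuous_on_basis by (intro Bochner_Integration.integral_sum integrable_sphere_measure_mult) auto
  also have "\<dots> = (\<Sum>i<length es. 1)"
    using orthonormal by (intro sum.cong) (auto simp: orthonormal_on_sphere_def)
  finally show ?thesis
    by simp
qed

context
  assumes rotation_invariant:
    "\<And>f R. f \<in> V \<Longrightarrow> orthogonal_transformation R \<Longrightarrow> (\<lambda>x. f (R x)) \<in> V"
begin

text \<open>\<open>f\<close> is the reproducing kernel at \<open>x\<close>, so \<open>f x = sphere_inner f f = kernel_diagonal x\<close>. Rotating
  it so that \<open>y\<close> goes to \<open>x\<close> and applying the Cauchy--Schwarz bound at \<open>y\<close> gives the claim.\<close>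
lemma kernel_diagonal_le:
  assumes "norm x = 1" "norm y = 1"
  shows "kernel_diagonal x \<le> kernel_diagonal y"
proof -
  define f where "f z = (\<Sum>i<length es. (es ! i) x * (es ! i) z)" for z
  have "f \<in> V"
    unfolding f_def[abs_def] using basis_mem by (intro sum_mem) auto
  then have "continuous_on UNIV f"
    by (rule continuous_on_mem)
  have "sphere_inner f (es ! i) = (es ! i) x" if "i < length es" for i
    using orthonormal continuous_on_basis _ \<open>continuous_on UNIV f\<close> that
    by (rule sphere_inner_lincomb_orthonormal) (simp add: f_def)
  then have "sphere_inner f f = kernel_diagonal x"
    using sphere_inner_self_in_sphere_span[OF orthonormal continuous_on_basis spanning[OF \<open>f \<in> V\<close>]
        \<open>continuous_on UNIV f\<close>]
    by (simp add: kernel_diagonal_def)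
  obtain R where R: "orthogonal_transformation R" "R y = x"
    using assms by (metis orthogonal_transformation_exists)
  have "(\<lambda>z. f z * f z) \<in> borel_measurable borel"
    using \<open>continuous_on UNIV f\<close> by (intro borel_measurable_continuous_onI continuous_intros)
  then have "sphere_inner (\<lambda>z. f (R z)) (\<lambda>z. f (R z)) = sphere_inner f f"
    using integral_sphere_measure_orthogonal_transformation[OF R(1)] by (simp add: sphere_inner_def)
  moreover have "(\<lambda>z. f (R z)) \<in> V"
    using \<open>f \<in> V\<close> R(1) by (rule rotation_invariant)
  ultimately have "(kernel_diagonal x)\<^sup>2 \<le> kernel_diagonal x * kernel_diagonal y"
    using square_le_sphere_inner_mult_kernel_diagonal[of "\<lambda>z. f (R z)" y] assms R(2)
      \<open>sphere_inner f f = kernel_diagonal x\<close>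
    by (simp add: f_def kernel_diagonal_def power2_eq_square)
  then show ?thesis
    using kernel_diagonal_nonneg[of x] kernel_diagonal_nonneg[of y]
    by (cases "kernel_diagonal x = 0") (auto simp: power2_eq_square)
qed

lemma kernel_diagonal_le_length:
  assumes "norm x = 1"
  shows "kernel_diagonal x \<le> length es"
proof -
  have "kernel_diagonal x = (\<integral>y. kernel_diagonal x \<partial>(sphere_measure :: (real^'n) measure))"
    by simp
  also have "\<dots> \<le> (\<integral>y. kernel_diagonal y \<partial>sphere_measure)"
  proof (rule integral_mono_AE)
    show "integrable sphere_measure (\<lambda>y::real^'n. kernel_diagonal x)"
      by (rule integrable_sphere_measure) simp
    show "integrable sphere_measure kernel_diagonal"
      unfolding kernel_diagonal_def[abs_def] using continuous_on_basis
      by (intro integrable_sphere_measure continuous_intros) auto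
    show "AE y in sphere_measure. kernel_diagonal x \<le> kernel_diagonal y"
      using AE_sphere_measure_norm by (rule eventually_mono) (rule kernel_diagonal_le[OF assms])
  qed
  finally show ?thesis
    by (simp add: integral_kernel_diagonal)
qed

theorem square_le_length_mult_sphere_inner:
  assumes "f \<in> V" "norm x = 1"
  shows "(f x)\<^sup>2 \<le> length es * sphere_inner f f"
proof -
  have "(f x)\<^sup>2 \<le> sphere_inner f f * kernel_diagonal x"
    using assms by (rule square_le_sphere_inner_mult_kernel_diagonal)
  also have "\<dots> \<le> sphere_inner f f * length es"
    using kernel_diagonal_le_length[OF assms(2)] sphere_inner_self_nonneg by (rule mult_left_mono)
  finally show ?thesis
    by (simp add: mult.commute)
qed

end

end

interpretation homogeneous_polys: sphere_function_space "Collect (homogeneous_poly d)" for d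
  by unfold_locales
    (auto intro: continuous_on_homogeneous_poly homogeneous_poly_zero homogeneous_poly_add
      homogeneous_poly_cmult)

lemma in_sphere_span_homogeneous_poly:
  assumes "\<forall>\<alpha>\<in>exponents_of_degree d. in_sphere_span es (monomial \<alpha>)" "homogeneous_poly d p"
  shows "in_sphere_span es p"
proof -
  from assms(2) obtain c where "\<And>x. p x = (\<Sum>\<alpha>\<in>exponents_of_degree d. c \<alpha> * monomial \<alpha> x)"
    by (auto simp: homogeneous_poly_iff)
  then have "p = (\<lambda>x. \<Sum>\<alpha>\<in>exponents_of_degree d. c \<alpha> * monomial \<alpha> x)"
    by (simp add: fun_eq_iff)
  then show ?thesis
    using assms(1) by (simp add: in_sphere_span_sum finite_exponents_of_degree)
qed

theorem homogeneous_poly_square_le_sphere_inner: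
  fixes p :: "real^'n \<Rightarrow> real"
  assumes "homogeneous_poly d p" "norm x = 1"
  shows "(p x)\<^sup>2 \<le> real ((d + CARD('n) - 1) choose d) * sphere_inner p p"
proof -
  let ?B = "monomial ` exponents_of_degree d :: (real^'n \<Rightarrow> real) set"
  have "?B \<subseteq> Collect (homogeneous_poly d)"
    by (auto intro: homogeneous_poly_monomial)
  then obtain es where es: "orthonormal_on_sphere es" "set es \<subseteq> Collect (homogeneous_poly d)"
      "length es \<le> card ?B" "\<forall>f\<in>?B. in_sphere_span es f"
    using homogeneous_polys.gram_schmidt[OF finite_imageI[OF finite_exponents_of_degree]] by blast
  interpret orthonormal_sphere_basis "Collect (homogeneous_poly d)" es
    using es by unfold_locales (auto intro: in_sphere_span_homogeneous_poly)
  have "(p x)\<^sup>2 \<le> length es * sphere_inner p p"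
    using assms
    by (intro square_le_length_mult_sphere_inner)
      (auto intro: homogeneous_poly_compose_linear orthogonal_transformation_linear)
  also have "length es \<le> (d + CARD('n) - 1) choose d"
    using es(3) card_image_le[OF finite_exponents_of_degree, of monomial d]
      card_exponents_of_degree_le[where 'n='n, of d]
    by (meson order_trans)
  then have "length es * sphere_inner p p \<le> real ((d + CARD('n) - 1) choose d) * sphere_inner p p"
    by (intro mult_right_mono sphere_inner_self_nonneg) simp
  finally show ?thesis .
qed

lemma power_powr_inverse:
  fixes x :: real
  assumes "x \<ge> 0" "n > 0"
  shows "(x ^ n) powr (1 / real n) = x"
  using assms by (simp add: root_powr_inverse[symmetric] real_root_power_cancel)

lemma abs_le_sup_norm:
  fixes p :: "real^'n \<Rightarrow> real"
  assumes "continuous_on UNIV p" "norm x = 1"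
  shows "\<bar>p x\<bar> \<le> sup_norm p"
proof -
  have "compact ((\<lambda>x. \<bar>p x\<bar>) ` sphere 0 1)"
    using assms(1) by (intro compact_continuous_image continuous_intros) (auto intro: continuous_on_subset)
  then show ?thesis
    unfolding sup_norm_def using assms(2)
    by (intro cSUP_upper bounded_imp_bdd_above compact_imp_bounded) auto
qed

lemma sup_norm_le:
  fixes p :: "real^'n \<Rightarrow> real"
  assumes "\<And>x. norm x = 1 \<Longrightarrow> \<bar>p x\<bar> \<le> B"
  shows "sup_norm p \<le> B"
  unfolding sup_norm_def using assms by (intro cSUP_least) auto

lemma Lnorm_le_sup_norm:
  fixes p :: "real^'n \<Rightarrow> real"
  assumes "continuous_on UNIV p" "k > 0"
  shows "Lnorm k p \<le> sup_norm p"
proof -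
  define M where "M = sup_norm p"
  have bound: "\<bar>p x\<bar> \<le> M" if "norm x = 1" for x
    unfolding M_def using assms(1) that by (rule abs_le_sup_norm)
  then have "M \<ge> 0"
    using norm_axis_1 by (metis abs_ge_zero order_trans)
  have "(\<integral>x. p x ^ (2 * k) \<partial>sphere_measure) \<le> (\<integral>x. M ^ (2 * k) \<partial>(sphere_measure :: (real^'n) measure))"
  proof (rule integral_mono_AE)
    show "integrable sphere_measure (\<lambda>x. p x ^ (2 * k))"
      using assms(1) by (intro integrable_sphere_measure continuous_intros)
    show "AE x in sphere_measure. p x ^ (2 * k) \<le> M ^ (2 * k)"
    proof (rule eventually_mono[OF AE_sphere_measure_norm])
      fix x :: "real^'n"
      assume "norm x = 1"
      then have "\<bar>p x\<bar> ^ (2 * k) \<le> M ^ (2 * k)"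
        by (intro power_mono bound) auto
      then show "p x ^ (2 * k) \<le> M ^ (2 * k)"
        by (simp add: power_even_abs)
    qed
  qed (intro integrable_sphere_measure continuous_intros)
  then have "(\<integral>x. p x ^ (2 * k) \<partial>sphere_measure) \<le> M ^ (2 * k)"
    by simp
  then have "Lnorm k p \<le> (M ^ (2 * k)) powr (1 / (2 * real k))"
    unfolding Lnorm_def by (intro powr_mono2) (auto intro: integral_nonneg_AE simp: zero_le_even_power)
  also have "\<dots> = M"
    using power_powr_inverse[OF \<open>M \<ge> 0\<close>, of "2 * k"] assms(2) by simp
  finally show ?thesis
    by (simp add: M_def)
qed

lemma abs_le_powr_mult_Lnorm:
  fixes p :: "real^'n \<Rightarrow> real"
  assumes "k > 0" "C \<ge> 0" "p x ^ (2 * k) \<le> C * (\<integral>x. p x ^ (2 * k) \<partial>sphere_measure)"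
  shows "\<bar>p x\<bar> \<le> C powr (1 / (2 * real k)) * Lnorm k p"
proof -
  have "\<bar>p x\<bar> = (\<bar>p x\<bar> ^ (2 * k)) powr (1 / (2 * real k))"
    using power_powr_inverse[where x="\<bar>p x\<bar>" and n="2 * k"] assms(1) by simp
  also have "\<dots> \<le> (C * (\<integral>x. p x ^ (2 * k) \<partial>sphere_measure)) powr (1 / (2 * real k))"
    using assms(3) by (intro powr_mono2) (simp_all add: power_even_abs)
  also have "\<dots> = C powr (1 / (2 * real k)) * Lnorm k p"
    unfolding Lnorm_def using assms(2)
    by (auto intro!: powr_mult integral_nonneg_AE simp: zero_le_even_power)
  finally show ?thesis .
qed

theorem corollary3p1:
  fixes p :: "real^'n \<Rightarrow> real" and d k :: nat
  assumes "homogeneous_poly d p" and "k > 0"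
  shows "Lnorm k p \<le> sup_norm p \<and>
         sup_norm p \<le> real ((k * d + CARD('n) - 1) choose (k * d)) powr (1 / (2 * real k)) * Lnorm k p"
proof
  have "continuous_on UNIV p"
    using assms(1) by (rule continuous_on_homogeneous_poly)
  then show "Lnorm k p \<le> sup_norm p"
    using assms(2) by (rule Lnorm_le_sup_norm)
next
  let ?C = "real ((k * d + CARD('n) - 1) choose (k * d))"
  have "homogeneous_poly (k * d) (\<lambda>x. p x ^ k)"
    using assms(1) by (rule homogeneous_poly_power)
  moreover have "p x ^ (2 * k) = (p x ^ k)\<^sup>2" for x
    by (simp add: power_mult[symmetric] mult.commute)
  ultimately have "p x ^ (2 * k) \<le> ?C * sphere_inner (\<lambda>x. p x ^ k) (\<lambda>x. p x ^ k)"
    if "norm x = 1" for x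
    using that homogeneous_poly_square_le_sphere_inner by metis
  also have "sphere_inner (\<lambda>x. p x ^ k) (\<lambda>x. p x ^ k) = (\<integral>x. p x ^ (2 * k) \<partial>sphere_measure)"
    by (simp add: sphere_inner_def mult_2 power_add)
  finally have "p x ^ (2 * k) \<le> ?C * (\<integral>x. p x ^ (2 * k) \<partial>sphere_measure)" if "norm x = 1" for x
    using that .
  then show "sup_norm p \<le> ?C powr (1 / (2 * real k)) * Lnorm k p"
    using assms(2) by (intro sup_norm_le abs_le_powr_mult_Lnorm) simp_all
qed

end
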